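(* For all $n\in\mathbb{N}$, $\mathrm{SL}_n(\mathcal{A}(\bm{p}))=\mathrm{E}_n(\mathcal{A}(\bm{p}))$; that is, every $n\times n$ matrix over $\mathcal{A}(\bm{p})$ with determinant $\varepsilon$ is a finite product of elementary matrices.
   Context: Fix $\bm{p}:\mathbb{N}_0\to(0,\infty)$ with $\lim_{n\to\infty}\bm{p}(n)^{1/n}=\infty$. For an entire function $f$ write $f(z)=\sum_{n\ge0}\widehat f(n)z^n$. $\mathcal{A}(\bm{p})$ is the set of entire functions $f$ with $\sup_{n\ge 0}\bm{p}(n)|\widehat f(n)|<\infty$, with pointwise addition and scalar multiplication and the weighted Hadamard product $(f\ast g)(z)=\sum_{n\ge0}\bm{p}(n)\widehat f(n)\widehat g(n)z^n$; it is a commutative unital ring with unit $\varepsilon(z)=\sum_{n\ge0}\frac{z^n}{\bm{p}(n)}$. Determinants and matrix products are computed using $\ast$. $\mathrm{SL}_n(\mathcal{A}(\bm{p}))$ is the group of $n\times n$ matrices with determinant $\varepsilon$; an elementary matrix is $I_n+\alpha\mathbf{e}_{ij}$ with $i\ne j$, $\alpha\in\mathcal{A}(\bm{p})$, where $I_n$ is diagonal with entries $\varepsilon$ and $\mathbf{e}_{ij}$ has $\varepsilon$ in position $(i,j)$ and $0$ elsewhere; $\mathrm{E}_n(\mathcal{A}(\bm{p}))$ is the subgroup generated by elementary matrices. *)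

theory Defs
  imports "HOL-Analysis.Analysis" "HOL-Combinatorics.Permutations"
begin

definition coef :: "(complex \<Rightarrow> complex) \<Rightarrow> nat \<Rightarrow> complex" where
  "coef f n = (deriv ^^ n) f 0 / of_nat (fact n)"

definition Ap :: "(nat \<Rightarrow> real) \<Rightarrow> (complex \<Rightarrow> complex) set" where
  "Ap p = {f. f holomorphic_on UNIV \<and> (\<exists>B. \<forall>n. p n * norm (coef f n) \<le> B)}"

definition hmult :: "(nat \<Rightarrow> real) \<Rightarrow> (complex \<Rightarrow> complex) \<Rightarrow> (complex \<Rightarrow> complex) \<Rightarrow> (complex \<Rightarrow> complex)" where
  "hmult p f g = (\<lambda>z. \<Sum>n. of_real (p n) * coef f n * coef g n * z ^ n)"

definition eps :: "(nat \<Rightarrow> real) \<Rightarrow> complex \<Rightarrow> complex" where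
  "eps p = (\<lambda>z. \<Sum>n. z ^ n / of_real (p n))"

text \<open>Matrices of size k: entries indexed by a, b < k.\<close>
type_synonym mat = "nat \<Rightarrow> nat \<Rightarrow> (complex \<Rightarrow> complex)"

definition hprod_list :: "(nat \<Rightarrow> real) \<Rightarrow> (complex \<Rightarrow> complex) list \<Rightarrow> (complex \<Rightarrow> complex)" where
  "hprod_list p xs = foldr (hmult p) xs (eps p)"

definition hdet :: "(nat \<Rightarrow> real) \<Rightarrow> nat \<Rightarrow> mat \<Rightarrow> (complex \<Rightarrow> complex)" where
  "hdet p k M = (\<lambda>z. \<Sum>\<sigma>\<in>{\<sigma>. \<sigma> permutes {..<k}}.
      of_int (sign \<sigma>) * hprod_list p (map (\<lambda>i. M i (\<sigma> i)) [0..<k]) z)"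

definition matmul :: "(nat \<Rightarrow> real) \<Rightarrow> nat \<Rightarrow> mat \<Rightarrow> mat \<Rightarrow> mat" where
  "matmul p k M N = (\<lambda>i j z. \<Sum>l<k. hmult p (M i l) (N l j) z)"

definition idmat :: "(nat \<Rightarrow> real) \<Rightarrow> mat" where
  "idmat p = (\<lambda>a b. if a = b then eps p else (\<lambda>_. 0))"

text \<open>Elementary matrix I_k + alpha e_ij (i \<noteq> j, alpha in A(p)); here alpha * eps = alpha.\<close>
definition elementary :: "(nat \<Rightarrow> real) \<Rightarrow> nat \<Rightarrow> mat \<Rightarrow> bool" where
  "elementary p k G \<longleftrightarrow> (\<exists>i<k. \<exists>j<k. i \<noteq> j \<and> (\<exists>\<alpha>\<in>Ap p.
      \<forall>a<k. \<forall>b<k. G a b = (if a = b then eps p else if a = i \<and> b = j then \<alpha> else (\<lambda>_. 0))))"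

definition SL :: "(nat \<Rightarrow> real) \<Rightarrow> nat \<Rightarrow> mat set" where
  "SL p k = {M. (\<forall>a<k. \<forall>b<k. M a b \<in> Ap p) \<and> hdet p k M = eps p}"

definition in_E :: "(nat \<Rightarrow> real) \<Rightarrow> nat \<Rightarrow> mat \<Rightarrow> bool" where
  "in_E p k M \<longleftrightarrow> (\<exists>Gs. (\<forall>G\<in>set Gs. elementary p k G) \<and>
      (\<forall>a<k. \<forall>b<k. foldr (matmul p k) Gs (idmat p) a b = M a b))"

end

theory Submission
  imports Defs "HOL-Complex_Analysis.Cauchy_Integral_Formula" "Jordan_Normal_Form.Determinant"
begin

text \<open>
  Since \<open>p(n)\<^sup>1\<^sup>/\<^sup>n \<rightarrow> \<infinity>\<close>, the series \<open>\<Sum> a\<^sub>n z\<^sup>n / p(n)\<close> is entire for every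
  bounded sequence \<open>a\<close>, so \<open>f \<mapsto> (p n * coef f n)\<^sub>n\<close> is a ring isomorphism from
  \<open>(A(p), +, \<ast>)\<close> onto the bounded complex sequences with pointwise operations. A matrix in
  \<open>SL\<^sub>k(A(p))\<close> is therefore a sequence of matrices in \<open>SL\<^sub>k(\<complex>)\<close> with uniformly bounded entries.

  Every matrix in \<open>SL\<^sub>k(\<complex>)\<close> with entries bounded by \<open>C\<close> is a product of elementary matrices
  at a fixed sequence of positions, depending only on \<open>k\<close>, with coefficients bounded by some
  \<open>D(k, C)\<close>: expanding the determinant shows that the last column has an entry of size at least
  \<open>1 / (2 k! C\<^sup>k\<^sup>-\<^sup>1)\<close>, which one or two row additions with bounded coefficients turn into a
  \<open>1\<close> in the corner; the last row and column are then cleared, and the remaining block is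
  handled by induction on \<open>k\<close>. Collecting, at each position, the coefficients of all the
  coordinate matrices into one bounded sequence yields a factorization over \<open>A(p)\<close>.
\<close>

hide_type (open) Matrix.mat

section \<open>Bounded sequences\<close>

lemma Bseq_plus:
  fixes f g :: "nat \<Rightarrow> 'a::real_normed_vector"
  assumes "Bseq f" "Bseq g"
  shows "Bseq (\<lambda>n. f n + g n)"
proof -
  from assms obtain K L where "\<And>n. norm (f n) \<le> K" "\<And>n. norm (g n) \<le> L"
    unfolding Bseq_def by blast
  then have "norm (f n + g n) \<le> K + L" for n
    by (meson add_mono norm_triangle_ineq order_trans)
  then show ?thesis by (rule BseqI')
qed

lemma Bseq_sum:
  fixes f :: "'i \<Rightarrow> nat \<Rightarrow> 'a::real_normed_vector"
  shows "(\<And>x. x \<in> S \<Longrightarrow> Bseq (f x)) \<Longrightarrow> Bseq (\<lambda>n. \<Sum>x\<in>S. f x n)"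
  by (induction S rule: infinite_finite_induct) (auto intro: Bseq_plus)

lemma Bseq_prod:
  fixes f :: "'i \<Rightarrow> nat \<Rightarrow> 'a::real_normed_field"
  shows "(\<And>x. x \<in> S \<Longrightarrow> Bseq (f x)) \<Longrightarrow> Bseq (\<lambda>n. \<Prod>x\<in>S. f x n)"
  by (induction S rule: infinite_finite_induct) (auto intro: Bseq_mult)

lemma Bseq_prod_list:
  fixes f :: "'i \<Rightarrow> nat \<Rightarrow> 'a::real_normed_field"
  shows "(\<And>x. x \<in> set xs \<Longrightarrow> Bseq (f x)) \<Longrightarrow> Bseq (\<lambda>n. \<Prod>x\<leftarrow>xs. f x n)"
  by (induction xs) (auto intro: Bseq_mult)

lemma Bseq_finite_family:
  fixes f :: "'i \<Rightarrow> nat \<Rightarrow> 'a::real_normed_vector"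
  assumes "finite I" "\<And>i. i \<in> I \<Longrightarrow> Bseq (f i)"
  shows "\<exists>C. \<forall>i\<in>I. \<forall>n. norm (f i n) \<le> C"
proof -
  have "Bseq (\<lambda>n. \<Sum>i\<in>I. norm (f i n))"
    using assms(2) by (intro Bseq_sum) (auto simp: Bseq_def)
  then obtain C where C: "\<And>n. norm (\<Sum>i\<in>I. norm (f i n)) \<le> C"
    unfolding Bseq_def by blast
  have "norm (f i n) \<le> C" if "i \<in> I" for i n
  proof -
    have "norm (f i n) \<le> (\<Sum>i\<in>I. norm (f i n))"
      using assms(1) that by (intro member_le_sum) auto
    also have "\<dots> \<le> C" using C[of n] by simp
    finally show ?thesis .
  qed
  then show ?thesis by blast
qed

section \<open>\<open>A(p)\<close> as a ring of bounded sequences\<close>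

definition weighted_coef :: "(nat \<Rightarrow> real) \<Rightarrow> (complex \<Rightarrow> complex) \<Rightarrow> nat \<Rightarrow> complex" where
  "weighted_coef p f n = of_real (p n) * coef f n"

definition weighted_series :: "(nat \<Rightarrow> real) \<Rightarrow> (nat \<Rightarrow> complex) \<Rightarrow> complex \<Rightarrow> complex" where
  "weighted_series p a = (\<lambda>z. \<Sum>n. a n / of_real (p n) * z ^ n)"

locale rapid_weight =
  fixes p :: "nat \<Rightarrow> real"
  assumes weight_pos: "\<And>n. p n > 0"
    and root_weight_tendsto: "filterlim (\<lambda>n. root n (p n)) at_top sequentially"
begin

lemma weight_nonzero [simp]: "p n \<noteq> 0" "(of_real (p n) :: complex) \<noteq> 0"
  using weight_pos[of n] by auto

lemma summable_norm_weighted_terms: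
  fixes a :: "nat \<Rightarrow> complex"
  assumes "Bseq a"
  shows "summable (\<lambda>n. norm (a n / of_real (p n) * z ^ n))"
proof -
  obtain B where B: "\<And>n. cmod (a n) \<le> B" using assms unfolding Bseq_def by blast
  define r where "r = 2 * (norm z + 1)"
  have r: "r > 0" unfolding r_def by (smt (verit) norm_ge_zero)
  have "eventually (\<lambda>n. r \<le> root n (p n)) sequentially"
    using root_weight_tendsto unfolding filterlim_at_top by auto
  then have "eventually (\<lambda>n. norm (norm (a n / of_real (p n) * z ^ n)) \<le> B * (1/2) ^ n) sequentially"
    using eventually_ge_at_top[of 1]
  proof eventually_elim
    case (elim n)
    have "r ^ n \<le> root n (p n) ^ n" by (rule power_mono) (use elim r in auto)
    also have "\<dots> = p n" using real_root_pow_pos[of n "p n"] weight_pos[of n] elim by auto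
    finally have rn: "r ^ n \<le> p n" .
    have "norm z ^ n / p n \<le> norm z ^ n / r ^ n"
      by (rule divide_left_mono) (use rn r weight_pos[of n] in auto)
    also have "\<dots> = (norm z / r) ^ n" by (simp add: power_divide)
    also have "\<dots> \<le> (1/2) ^ n"
      by (rule power_mono) (use r in \<open>auto simp: r_def field_simps\<close>)
    finally have "norm z ^ n / p n \<le> (1/2) ^ n" .
    then have "cmod (a n) * (norm z ^ n / p n) \<le> B * (1/2) ^ n"
      using B[of n] weight_pos[of n] by (intro mult_mono) (auto intro: order_trans[OF norm_ge_zero B])
    then show ?case
      using weight_pos[of n] by (simp add: norm_mult norm_divide norm_power)
  qed
  then show ?thesis
    by (rule summable_comparison_test_ev) (intro summable_mult summable_geometric, auto)
qed

lemma summable_weighted_terms: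
  fixes a :: "nat \<Rightarrow> complex"
  shows "Bseq a \<Longrightarrow> summable (\<lambda>n. a n / of_real (p n) * z ^ n)"
  by (rule summable_norm_cancel[OF summable_norm_weighted_terms])

lemma fps_conv_radius_weighted:
  fixes a :: "nat \<Rightarrow> complex"
  shows "Bseq a \<Longrightarrow> fps_conv_radius (Abs_fps (\<lambda>n. a n / of_real (p n))) = \<infinity>"
  unfolding fps_conv_radius_def by (intro conv_radius_inftyI'') (use summable_weighted_terms in auto)

lemma weighted_series_eq_eval_fps:
  "weighted_series p a = eval_fps (Abs_fps (\<lambda>n. a n / of_real (p n)))"
  unfolding weighted_series_def eval_fps_def by simp

lemma weighted_series_holomorphic: "Bseq a \<Longrightarrow> weighted_series p a holomorphic_on UNIV"
  unfolding weighted_series_eq_eval_fps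
  by (rule holomorphic_on_eval_fps) (simp add: fps_conv_radius_weighted)

lemma coef_weighted_series: "Bseq a \<Longrightarrow> coef (weighted_series p a) n = a n / of_real (p n)"
  using fps_nth_fps_expansion[OF eval_fps_has_fps_expansion, of "Abs_fps (\<lambda>n. a n / of_real (p n))" n]
  unfolding coef_def weighted_series_eq_eval_fps by (simp add: fps_conv_radius_weighted)

lemma weighted_coef_series: "Bseq a \<Longrightarrow> weighted_coef p (weighted_series p a) = a"
  by (rule ext) (simp add: weighted_coef_def coef_weighted_series)

lemma weighted_series_in_Ap: "Bseq a \<Longrightarrow> weighted_series p a \<in> Ap p"
proof -
  assume a: "Bseq a"
  then obtain B where "\<And>n. cmod (a n) \<le> B" unfolding Bseq_def by blast
  then have "p n * cmod (coef (weighted_series p a) n) \<le> B" for n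
    using weight_pos[of n] by (simp add: coef_weighted_series[OF a] norm_divide)
  then show ?thesis unfolding Ap_def using weighted_series_holomorphic[OF a] by auto
qed

lemma Bseq_weighted_coef: "f \<in> Ap p \<Longrightarrow> Bseq (weighted_coef p f)"
proof -
  assume "f \<in> Ap p"
  then obtain B where "\<And>n. p n * cmod (coef f n) \<le> B" unfolding Ap_def by blast
  then have "cmod (weighted_coef p f n) \<le> B" for n
    using weight_pos[of n] by (simp add: weighted_coef_def norm_mult)
  then show ?thesis by (rule BseqI')
qed

lemma weighted_series_coef: "f \<in> Ap p \<Longrightarrow> weighted_series p (weighted_coef p f) = f"
proof (rule ext)
  fix z :: complex assume "f \<in> Ap p"
  then have "f holomorphic_on ball 0 (norm z + 1)"
    unfolding Ap_def by (auto intro: holomorphic_on_subset)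
  from holomorphic_power_series[OF this, of z]
  have "(\<lambda>n. coef f n * z ^ n) sums f z" by (simp add: coef_def)
  then show "weighted_series p (weighted_coef p f) z = f z"
    by (simp add: weighted_series_def weighted_coef_def sums_iff)
qed

lemma weighted_series_inj:
  "Bseq a \<Longrightarrow> Bseq b \<Longrightarrow> weighted_series p a = weighted_series p b \<Longrightarrow> a = b"
  by (metis weighted_coef_series)

lemma hmult_eq_weighted_series:
  "hmult p f g = weighted_series p (\<lambda>n. weighted_coef p f n * weighted_coef p g n)"
  unfolding hmult_def weighted_series_def weighted_coef_def
  by (intro ext arg_cong[where f = suminf]) (simp add: field_simps)

lemma hmult_weighted_series:
  "Bseq a \<Longrightarrow> Bseq b \<Longrightarrow>
    hmult p (weighted_series p a) (weighted_series p b) = weighted_series p (\<lambda>n. a n * b n)"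
  by (simp add: hmult_eq_weighted_series weighted_coef_series)

lemma eps_eq_weighted_series: "eps p = weighted_series p (\<lambda>_. 1)"
  unfolding eps_def weighted_series_def by simp

lemma weighted_series_zero: "weighted_series p (\<lambda>_. 0) = (\<lambda>_. 0)"
  unfolding weighted_series_def by simp

lemma weighted_series_sum:
  assumes "finite S" "\<And>x. x \<in> S \<Longrightarrow> Bseq (a x)"
  shows "weighted_series p (\<lambda>n. \<Sum>x\<in>S. a x n) z = (\<Sum>x\<in>S. weighted_series p (a x) z)"
proof -
  have "(\<Sum>n. \<Sum>x\<in>S. a x n / of_real (p n) * z ^ n) = (\<Sum>x\<in>S. \<Sum>n. a x n / of_real (p n) * z ^ n)"
    using assms by (intro suminf_sum summable_weighted_terms) auto
  then show ?thesis
    by (simp add: weighted_series_def sum_divide_distrib sum_distrib_right)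
qed

lemma weighted_series_cmult:
  assumes "Bseq a"
  shows "weighted_series p (\<lambda>n. c * a n) z = c * weighted_series p a z"
  using suminf_mult[OF summable_weighted_terms[OF assms], of c z]
  by (simp add: weighted_series_def ac_simps)

end

section \<open>Uniformly bounded elementary factorization in \<open>SL\<^sub>n(\<complex>)\<close>\<close>

text \<open>\<open>addrow_mat n c i j\<close> is the elementary matrix \<open>I + c e\<^sub>i\<^sub>j\<close>.\<close>

fun elementary_product :: "nat \<Rightarrow> (nat \<times> nat) list \<Rightarrow> complex list \<Rightarrow> complex Matrix.mat" where
  "elementary_product n ((i, j) # W) (c # cs) = addrow_mat n c i j * elementary_product n W cs"
| "elementary_product n _ _ = 1\<^sub>m n"

definition valid_word :: "nat \<Rightarrow> (nat \<times> nat) list \<Rightarrow> bool" where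
  "valid_word n W \<longleftrightarrow> (\<forall>(i, j)\<in>set W. i < n \<and> j < n \<and> i \<noteq> j)"

definition entries_le :: "nat \<Rightarrow> complex Matrix.mat \<Rightarrow> real \<Rightarrow> bool" where
  "entries_le n A C \<longleftrightarrow> (\<forall>i<n. \<forall>j<n. cmod (A $$ (i, j)) \<le> C)"

definition word_factorable :: "nat \<Rightarrow> (nat \<times> nat) list \<Rightarrow> real \<Rightarrow> complex Matrix.mat \<Rightarrow> bool" where
  "word_factorable n W D A \<longleftrightarrow>
     (\<exists>cs. length cs = length W \<and> (\<forall>c\<in>set cs. cmod c \<le> D) \<and> A = elementary_product n W cs)"

lemma elementary_product_carrier [simp]: "elementary_product n W cs \<in> carrier_mat n n"
  by (induction n W cs rule: elementary_product.induct) auto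

lemma elementary_product_append:
  "length W1 = length cs1 \<Longrightarrow>
    elementary_product n (W1 @ W2) (cs1 @ cs2) = elementary_product n W1 cs1 * elementary_product n W2 cs2"
proof (induction W1 arbitrary: cs1)
  case (Cons w W1)
  then obtain c cs where "cs1 = c # cs" by (cases cs1) auto
  with Cons show ?case
    by (cases w) (simp add: assoc_mult_mat[of _ n n _ n _ n])
qed (simp add: left_mult_one_mat[OF elementary_product_carrier])

lemma det_elementary_product: "valid_word n W \<Longrightarrow> det (elementary_product n W cs) = 1"
  by (induction n W cs rule: elementary_product.induct)
    (auto simp: valid_word_def det_mult[OF addrow_mat_carrier elementary_product_carrier] det_addrow_mat)

lemma addrow_mat_zero: "addrow_mat n (0 :: complex) i j = 1\<^sub>m n"
  by (rule eq_matI) auto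

lemma elementary_product_zeros: "elementary_product n W (replicate k 0) = 1\<^sub>m n"
proof (induction W arbitrary: k)
  case (Cons w W)
  then show ?case by (cases w; cases k) (simp_all add: addrow_mat_zero)
qed simp

lemma word_factorable_mono: "word_factorable n W D A \<Longrightarrow> D \<le> D' \<Longrightarrow> word_factorable n W D' A"
  unfolding word_factorable_def by force

lemma word_factorable_mult:
  assumes "word_factorable n W1 D A" "word_factorable n W2 D B"
  shows "word_factorable n (W1 @ W2) D (A * B)"
proof -
  from assms obtain cs1 cs2 where
    "length cs1 = length W1" "\<forall>c\<in>set cs1. cmod c \<le> D" "A = elementary_product n W1 cs1"
    "length cs2 = length W2" "\<forall>c\<in>set cs2. cmod c \<le> D" "B = elementary_product n W2 cs2"
    unfolding word_factorable_def by blast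
  then show ?thesis unfolding word_factorable_def
    by (intro exI[of _ "cs1 @ cs2"]) (auto simp: elementary_product_append)
qed

lemma word_factorable_one: "0 \<le> D \<Longrightarrow> word_factorable n W D (1\<^sub>m n)"
  unfolding word_factorable_def
  by (intro exI[of _ "replicate (length W) 0"]) (auto simp: elementary_product_zeros)

lemma word_factorable_addrow_mat:
  assumes "(i, j) \<in> set W"
  shows "word_factorable n W (cmod c) (addrow_mat n c i j)"
proof -
  obtain W1 W2 where W: "W = W1 @ (i, j) # W2" using split_list[OF assms] by blast
  have "word_factorable n [(i, j)] (cmod c) (addrow_mat n c i j)"
    unfolding word_factorable_def by (intro exI[of _ "[c]"]) auto
  then have "word_factorable n (W1 @ [(i, j)] @ W2) (cmod c) (1\<^sub>m n * (addrow_mat n c i j * 1\<^sub>m n))"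
    by (intro word_factorable_mult word_factorable_one) auto
  then show ?thesis unfolding W by simp
qed

lemma word_factorable_carrier: "word_factorable n W D A \<Longrightarrow> A \<in> carrier_mat n n"
  unfolding word_factorable_def by auto

lemma det_word_factorable: "valid_word n W \<Longrightarrow> word_factorable n W D A \<Longrightarrow> det A = 1"
  unfolding word_factorable_def by (auto simp: det_elementary_product)

lemma index_addrow_mat_mult:
  fixes X :: "complex Matrix.mat"
  assumes "X \<in> carrier_mat n n" "l < n" "i < n" "j < n"
  shows "(addrow_mat n c k l * X) $$ (i, j) = (if k = i then c * X $$ (l, j) + X $$ (i, j) else X $$ (i, j))"
  using assms by (simp add: addrow_mat[OF assms(1,2), symmetric])

lemma index_mult_addrow_mat:
  fixes X :: "complex Matrix.mat"
  assumes "X \<in> carrier_mat n n" "k < n" "i < n" "j < n"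
  shows "(X * addrow_mat n c k l) $$ (i, j) = (if l = j then c * X $$ (i, k) + X $$ (i, j) else X $$ (i, j))"
  using assms by (simp add: addcol_mat[OF assms(1,2), symmetric])

lemma addrow_mat_cancel:
  assumes "k < n" "l < n" "k \<noteq> l" "X \<in> carrier_mat n n"
  shows "addrow_mat n (- c) k l * (addrow_mat n (c :: complex) k l * X) = X"
proof -
  have "addrow_mat n (- c) k l * (addrow_mat n c k l * X) = (addrow_mat n (- c) k l * addrow_mat n c k l) * X"
    using assms by (simp add: assoc_mult_mat[of _ n n _ n _ n])
  also have "addrow_mat n (- c) k l * addrow_mat n c k l = 1\<^sub>m n"
    using addrow_mat_inv[OF assms(1-3), of "- c"] by simp
  finally show ?thesis using assms by simp
qed

lemma entries_le_mono: "entries_le n A C \<Longrightarrow> C \<le> C' \<Longrightarrow> entries_le n A C'"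
  unfolding entries_le_def by force

lemma entries_le_nonneg: "entries_le n A K \<Longrightarrow> 0 < n \<Longrightarrow> 0 \<le> K"
  unfolding entries_le_def by (meson norm_ge_zero order_trans)

lemma entries_le_addrow_mat_mult:
  assumes "X \<in> carrier_mat n n" "l < n" "entries_le n X K"
  shows "entries_le n (addrow_mat n c k l * X) ((1 + cmod c) * K)"
  unfolding entries_le_def
proof (intro allI impI)
  fix i j assume ij: "i < n" "j < n"
  have XK: "cmod (X $$ (l, j)) \<le> K" "cmod (X $$ (i, j)) \<le> K"
    using assms ij unfolding entries_le_def by auto
  then have "0 \<le> K" by (meson norm_ge_zero order_trans)
  have "cmod (c * X $$ (l, j) + X $$ (i, j)) \<le> cmod c * K + K"
    using XK by (intro order_trans[OF norm_triangle_ineq] add_mono)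
      (auto simp: norm_mult intro: mult_left_mono)
  moreover have "cmod (X $$ (i, j)) \<le> cmod c * K + K"
    using XK \<open>0 \<le> K\<close> by (simp add: add_increasing)
  ultimately show "cmod ((addrow_mat n c k l * X) $$ (i, j)) \<le> (1 + cmod c) * K"
    by (simp add: index_addrow_mat_mult[OF assms(1,2) ij] algebra_simps)
qed

lemma norm_det_le_column_bound:
  assumes A: "A \<in> carrier_mat n n" and AC: "entries_le n A C" and "0 \<le> C"
    and J: "J < n" and col: "\<And>i. i < n \<Longrightarrow> cmod (A $$ (i, J)) \<le> \<mu>"
  shows "cmod (det A) \<le> fact n * (\<mu> * C ^ (n - 1))"
proof -
  have term_le: "cmod (\<Prod>i = 0..<n. A $$ (i, \<sigma> i)) \<le> \<mu> * C ^ (n - 1)"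
    if \<sigma>: "\<sigma> permutes {0..<n}" for \<sigma>
  proof -
    have "J \<in> \<sigma> ` {0..<n}" using J permutes_image[OF \<sigma>] by simp
    then obtain i0 where i0: "i0 \<in> {0..<n}" "\<sigma> i0 = J" by blast
    have "cmod (\<Prod>i = 0..<n. A $$ (i, \<sigma> i)) = (\<Prod>i = 0..<n. cmod (A $$ (i, \<sigma> i)))"
      by (simp add: prod_norm)
    also have "\<dots> = cmod (A $$ (i0, J)) * (\<Prod>i \<in> {0..<n} - {i0}. cmod (A $$ (i, \<sigma> i)))"
      using i0 by (simp add: prod.remove)
    also have "\<dots> \<le> \<mu> * (\<Prod>i \<in> {0..<n} - {i0}. C)"
    proof (rule mult_mono)
      show "(\<Prod>i \<in> {0..<n} - {i0}. cmod (A $$ (i, \<sigma> i))) \<le> (\<Prod>i \<in> {0..<n} - {i0}. C)"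
        using AC permutes_in_image[OF \<sigma>] by (intro prod_mono) (auto simp: entries_le_def)
      show "cmod (A $$ (i0, J)) \<le> \<mu>" using col i0 by simp
      show "0 \<le> \<mu>" using order_trans[OF norm_ge_zero col[OF J]] .
      show "0 \<le> (\<Prod>i \<in> {0..<n} - {i0}. cmod (A $$ (i, \<sigma> i)))" by (simp add: prod_nonneg)
    qed
    also have "(\<Prod>i \<in> {0..<n} - {i0}. C) = C ^ (n - 1)"
      using i0 by simp
    finally show ?thesis .
  qed
  have "cmod (det A) = cmod (\<Sum>\<sigma> | \<sigma> permutes {0..<n}. signof \<sigma> * (\<Prod>i = 0..<n. A $$ (i, \<sigma> i)))"
    using det_def'[OF A] by simp
  also have "\<dots> \<le> (\<Sum>\<sigma> | \<sigma> permutes {0..<n}. cmod (signof \<sigma> * (\<Prod>i = 0..<n. A $$ (i, \<sigma> i))))"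
    by (rule norm_sum)
  also have "\<dots> \<le> (\<Sum>\<sigma> | \<sigma> permutes {0..<n}. \<mu> * C ^ (n - 1))"
    by (rule sum_mono) (use term_le in \<open>simp add: norm_mult sign_def\<close>)
  also have "\<dots> = fact n * (\<mu> * C ^ (n - 1))"
    by (simp add: card_permutations[of "{0..<n}" n])
  finally show ?thesis .
qed

lemma det_one_large_column_entry:
  assumes A: "A \<in> carrier_mat n n" and "entries_le n A C" "0 < C" "J < n" "det A = 1"
  obtains i where "i < n" "1 / (2 * fact n * C ^ (n - 1)) \<le> cmod (A $$ (i, J))"
proof (rule ccontr)
  define \<delta> where "\<delta> = 1 / (2 * fact n * C ^ (n - 1))"
  assume "\<not> thesis"
  with that have "\<And>i. i < n \<Longrightarrow> cmod (A $$ (i, J)) \<le> \<delta>"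
    unfolding \<delta>_def by force
  from norm_det_le_column_bound[OF assms(1,2) _ assms(4) this] assms(3,5)
  have "1 \<le> fact n * (\<delta> * C ^ (n - 1))" by simp
  then show False using \<open>0 < C\<close> by (simp add: \<delta>_def)
qed

lemma corner_one_by_row_addition:
  assumes A: "A \<in> carrier_mat n n" "entries_le n A C" and i0: "i0 < n" "i0 \<noteq> N" "A $$ (i0, N) \<noteq> 0"
    and N: "N < n" "(N, i0) \<in> set W" and c: "cmod ((1 - A $$ (N, N)) / A $$ (i0, N)) \<le> K"
  shows "\<exists>E A'. word_factorable n W K E \<and> A' \<in> carrier_mat n n \<and> A' $$ (N, N) = 1 \<and>
    entries_le n A' ((1 + K) * C) \<and> A = E * A'"
proof (intro exI conjI)
  define c where "c = (1 - A $$ (N, N)) / A $$ (i0, N)"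
  show "word_factorable n W K (addrow_mat n (- c) N i0)"
    using word_factorable_addrow_mat[OF N(2)] by (rule word_factorable_mono) (use c in \<open>simp add: c_def\<close>)
  show "addrow_mat n c N i0 * A \<in> carrier_mat n n"
    using A(1) by (rule mult_carrier_mat[OF addrow_mat_carrier])
  show "(addrow_mat n c N i0 * A) $$ (N, N) = 1"
    using A i0 N by (simp add: index_addrow_mat_mult c_def del: index_mult_mat(1))
  have "0 \<le> C" using entries_le_nonneg[OF A(2)] N by simp
  then show "entries_le n (addrow_mat n c N i0 * A) ((1 + K) * C)"
    using c by (intro entries_le_mono[OF entries_le_addrow_mat_mult[OF A(1) i0(1) A(2)]])
      (simp add: c_def mult_right_mono)
  show "A = addrow_mat n (- c) N i0 * (addrow_mat n c N i0 * A)"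
    using A i0 N by (simp add: addrow_mat_cancel)
qed

lemma corner_one_by_two_row_additions:
  assumes A: "A \<in> carrier_mat n n" "entries_le n A C" "A $$ (N, N) \<noteq> 0"
    and mN: "m < n" "N < n" "m \<noteq> N"
    and d: "cmod ((1 - A $$ (m, N)) / A $$ (N, N)) \<le> K" and K: "1 + C \<le> K"
  shows "\<exists>E A'. word_factorable n [(m, N), (N, m)] K E \<and> A' \<in> carrier_mat n n \<and> A' $$ (N, N) = 1 \<and>
    entries_le n A' ((1 + K) * ((1 + K) * C)) \<and> A = E * A'"
proof (intro exI conjI)
  define d where "d = (1 - A $$ (m, N)) / A $$ (N, N)"
  define e where "e = 1 - A $$ (N, N)"
  define A1 where "A1 = addrow_mat n d m N * A"
  define A' where "A' = addrow_mat n e N m * A1"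
  have C: "0 \<le> C" using entries_le_nonneg[OF A(2)] mN by simp
  have A1: "A1 \<in> carrier_mat n n" "A1 $$ (m, N) = 1" "A1 $$ (N, N) = A $$ (N, N)"
    using A mN by (auto simp: A1_def index_addrow_mat_mult d_def mult_carrier_mat[OF addrow_mat_carrier A(1)]
        simp del: index_mult_mat(1))
  have "cmod (A $$ (N, N)) \<le> C" using A(2) mN(2) unfolding entries_le_def by blast
  then have e: "cmod e \<le> K"
    using norm_triangle_ineq4[of 1 "A $$ (N, N)"] K by (simp add: e_def)
  show A': "A' \<in> carrier_mat n n"
    unfolding A'_def using A1(1) by (rule mult_carrier_mat[OF addrow_mat_carrier])
  show "A' $$ (N, N) = 1"
    using A1 mN by (simp add: A'_def index_addrow_mat_mult e_def del: index_mult_mat(1))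
  have "entries_le n A1 ((1 + K) * C)"
    unfolding A1_def using d C
    by (intro entries_le_mono[OF entries_le_addrow_mat_mult[OF A(1) mN(2) A(2)]]) (simp add: d_def mult_right_mono)
  moreover have "(1 + cmod e) * ((1 + K) * C) \<le> (1 + K) * ((1 + K) * C)"
    using e K C by (intro mult_right_mono) auto
  ultimately show "entries_le n A' ((1 + K) * ((1 + K) * C))"
    unfolding A'_def by (intro entries_le_mono[OF entries_le_addrow_mat_mult[OF A1(1) mN(1)]])
  show "word_factorable n [(m, N), (N, m)] K (elementary_product n [(m, N), (N, m)] [- d, - e])"
    using d e unfolding word_factorable_def by (intro exI[of _ "[- d, - e]"]) (auto simp: d_def)
  have "elementary_product n [(m, N), (N, m)] [- d, - e] * A' =
      addrow_mat n (- d) m N * (addrow_mat n (- e) N m * A')"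
    using A' by (simp add: assoc_mult_mat[of _ n n _ n _ n])
  also have "addrow_mat n (- e) N m * A' = A1"
    unfolding A'_def using A1(1) mN by (simp add: addrow_mat_cancel)
  also have "addrow_mat n (- d) m N * A1 = A"
    unfolding A1_def using A mN by (simp add: addrow_mat_cancel)
  finally show "A = elementary_product n [(m, N), (N, m)] [- d, - e] * A'" by (rule sym)
qed

definition bounded_SL :: "nat \<Rightarrow> real \<Rightarrow> complex Matrix.mat set" where
  "bounded_SL n C = {A \<in> carrier_mat n n. entries_le n A C \<and> det A = 1}"

lemma norm_one_minus_div_le:
  assumes "cmod a \<le> C" "\<delta> \<le> cmod b" "0 < \<delta>"
  shows "cmod ((1 - a) / b) \<le> (1 + C) / \<delta>"
proof -
  have "cmod (1 - a) \<le> 1 + C" using norm_triangle_ineq4[of 1 a] assms(1) by simp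
  moreover have "0 \<le> 1 + C" using assms(1) norm_ge_zero[of a] by linarith
  ultimately have "cmod (1 - a) / cmod b \<le> (1 + C) / \<delta>"
    using assms by (intro frac_le) auto
  then show ?thesis by (simp add: norm_divide)
qed

lemma corner_normalization:
  assumes n: "n = Suc N" "N = Suc m"
  shows "\<exists>K C'. \<forall>A \<in> bounded_SL n C. \<exists>E A'.
    word_factorable n (map (\<lambda>i. (N, i)) [0..<N] @ [(m, N), (N, m)]) K E \<and>
    A' \<in> carrier_mat n n \<and> A' $$ (N, N) = 1 \<and> entries_le n A' C' \<and> A = E * A'"
proof -
  define W1 where "W1 = map (\<lambda>i. (N, i)) [0..<N]"
  define C0 where "C0 = max C 1"
  define \<delta> where "\<delta> = 1 / (2 * fact n * C0 ^ (n - 1))"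
  define K where "K = (1 + C0) / \<delta> + (1 + C0)"
  have C0: "1 \<le> C0" "C \<le> C0" unfolding C0_def by auto
  have \<delta>: "0 < \<delta>" unfolding \<delta>_def using C0 by simp
  have K: "1 + C0 \<le> K" "0 \<le> K" unfolding K_def using C0 \<delta> by auto
  have Nn: "N < n" "m < n" "m \<noteq> N" using n by auto
  have "\<exists>E A'. word_factorable n (W1 @ [(m, N), (N, m)]) K E \<and> A' \<in> carrier_mat n n \<and>
      A' $$ (N, N) = 1 \<and> entries_le n A' ((1 + K) * ((1 + K) * C0)) \<and> A = E * A'"
    if "A \<in> bounded_SL n C" for A
  proof -
    from that have A: "A \<in> carrier_mat n n" "entries_le n A C0" "det A = 1"
      using entries_le_mono C0(2) by (auto simp: bounded_SL_def)
    obtain i0 where i0: "i0 < n" "\<delta> \<le> cmod (A $$ (i0, N))"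
      using det_one_large_column_entry[OF A(1,2) _ Nn(1) A(3)] C0 unfolding \<delta>_def by auto
    with \<delta> have nz: "A $$ (i0, N) \<noteq> 0" by auto
    have quotient_le: "cmod ((1 - A $$ (i, N)) / A $$ (i0, N)) \<le> K" if "i < n" for i
    proof -
      have "cmod (A $$ (i, N)) \<le> C0" using A(2) that Nn(1) unfolding entries_le_def by blast
      from norm_one_minus_div_le[OF this i0(2) \<delta>] show ?thesis
        unfolding K_def using C0(1) by linarith
    qed
    show ?thesis
    proof (cases "i0 = N")
      case False
      have "(N, i0) \<in> set (W1 @ [(m, N), (N, m)])" using False i0 n unfolding W1_def by auto
      from corner_one_by_row_addition[OF A(1,2) i0(1) False nz Nn(1) this quotient_le[OF Nn(1)]]
      obtain E A' where "word_factorable n (W1 @ [(m, N), (N, m)]) K E" "A' \<in> carrier_mat n n"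
        "A' $$ (N, N) = 1" "entries_le n A' ((1 + K) * C0)" "A = E * A'" by blast
      moreover have "(1 + K) * C0 \<le> (1 + K) * ((1 + K) * C0)" using K C0 by simp
      ultimately show ?thesis by (blast intro: entries_le_mono)
    next
      case True
      from corner_one_by_two_row_additions[OF A(1,2) nz[unfolded True] Nn(2,1,3)
          quotient_le[OF Nn(2), unfolded True] K(1)]
      obtain E A' where E: "word_factorable n [(m, N), (N, m)] K E" and A': "A' \<in> carrier_mat n n"
        "A' $$ (N, N) = 1" "entries_le n A' ((1 + K) * ((1 + K) * C0))" "A = E * A'" by blast
      have "word_factorable n (W1 @ [(m, N), (N, m)]) K (1\<^sub>m n * E)"
        using K(2) E by (intro word_factorable_mult word_factorable_one)
      moreover have "1\<^sub>m n * E = E" using word_factorable_carrier[OF E] by simp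
      ultimately show ?thesis using A' by auto
    qed
  qed
  then show ?thesis unfolding W1_def by blast
qed

definition row_elim :: "nat \<Rightarrow> nat \<Rightarrow> complex Matrix.mat \<Rightarrow> nat set \<Rightarrow> complex Matrix.mat" where
  "row_elim n N A S = Matrix.mat n n (\<lambda>(i, j).
     if i \<in> S then A $$ (i, j) - A $$ (i, N) * A $$ (N, j) else A $$ (i, j))"

definition col_elim :: "nat \<Rightarrow> nat \<Rightarrow> complex Matrix.mat \<Rightarrow> nat set \<Rightarrow> complex Matrix.mat" where
  "col_elim n N A T = Matrix.mat n n (\<lambda>(i, j).
     if j \<in> T then A $$ (i, j) - A $$ (N, j) * A $$ (i, N) else A $$ (i, j))"

lemma row_elim_carrier [simp]:
  "row_elim n N A S \<in> carrier_mat n n" "dim_row (row_elim n N A S) = n" "dim_col (row_elim n N A S) = n"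
  unfolding row_elim_def by simp_all

lemma col_elim_carrier [simp]:
  "col_elim n N A T \<in> carrier_mat n n" "dim_row (col_elim n N A T) = n" "dim_col (col_elim n N A T) = n"
  unfolding col_elim_def by simp_all

lemma index_row_elim:
  "i < n \<Longrightarrow> j < n \<Longrightarrow> row_elim n N A S $$ (i, j) =
    (if i \<in> S then A $$ (i, j) - A $$ (i, N) * A $$ (N, j) else A $$ (i, j))"
  unfolding row_elim_def by simp

lemma index_col_elim:
  "i < n \<Longrightarrow> j < n \<Longrightarrow> col_elim n N A T $$ (i, j) =
    (if j \<in> T then A $$ (i, j) - A $$ (N, j) * A $$ (i, N) else A $$ (i, j))"
  unfolding col_elim_def by simp

lemma row_elim_empty: "A \<in> carrier_mat n n \<Longrightarrow> row_elim n N A {} = A"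
  by (rule eq_matI) (auto simp: index_row_elim)

lemma col_elim_empty: "A \<in> carrier_mat n n \<Longrightarrow> col_elim n N A {} = A"
  by (rule eq_matI) (auto simp: index_col_elim)

lemma row_elim_factor:
  assumes "N < n" "distinct xs" "N \<notin> set xs" "set xs \<inter> S = {}" "N \<notin> S"
  shows "row_elim n N A S =
    elementary_product n (map (\<lambda>x. (x, N)) xs) (map (\<lambda>x. A $$ (x, N)) xs) * row_elim n N A (set xs \<union> S)"
  using assms(2-5)
proof (induction xs arbitrary: S)
  case Nil then show ?case by (simp add: left_mult_one_mat[of _ n n])
next
  case (Cons x xs)
  have "row_elim n N A S = addrow_mat n (A $$ (x, N)) x N * row_elim n N A (insert x S)"
  proof (rule eq_matI)
    fix i j assume "i < dim_row (addrow_mat n (A $$ (x, N)) x N * row_elim n N A (insert x S))"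
      "j < dim_col (addrow_mat n (A $$ (x, N)) x N * row_elim n N A (insert x S))"
    then show "row_elim n N A S $$ (i, j) = (addrow_mat n (A $$ (x, N)) x N * row_elim n N A (insert x S)) $$ (i, j)"
      using Cons.prems assms(1)
      by (auto simp: index_addrow_mat_mult[OF row_elim_carrier(1)] index_row_elim simp del: index_mult_mat(1))
  qed auto
  also have "row_elim n N A (insert x S) =
      elementary_product n (map (\<lambda>x. (x, N)) xs) (map (\<lambda>x. A $$ (x, N)) xs) * row_elim n N A (set xs \<union> insert x S)"
    using Cons.prems by (intro Cons.IH) auto
  finally show ?case
    by (simp add: assoc_mult_mat[of _ n n _ n _ n] insert_commute)
qed

lemma col_elim_factor:
  assumes "N < n" "distinct xs" "N \<notin> set xs" "set xs \<inter> T = {}" "N \<notin> T" "set xs \<subseteq> {..<n}"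
  shows "col_elim n N A T =
    col_elim n N A (set xs \<union> T) * elementary_product n (rev (map (\<lambda>x. (N, x)) xs)) (rev (map (\<lambda>x. A $$ (N, x)) xs))"
  using assms(2-6)
proof (induction xs arbitrary: T)
  case Nil then show ?case by (simp add: right_mult_one_mat[of _ n n])
next
  case (Cons x xs)
  have "col_elim n N A T = col_elim n N A (insert x T) * addrow_mat n (A $$ (N, x)) N x"
  proof (rule eq_matI)
    fix i j assume "i < dim_row (col_elim n N A (insert x T) * addrow_mat n (A $$ (N, x)) N x)"
      "j < dim_col (col_elim n N A (insert x T) * addrow_mat n (A $$ (N, x)) N x)"
    then show "col_elim n N A T $$ (i, j) = (col_elim n N A (insert x T) * addrow_mat n (A $$ (N, x)) N x) $$ (i, j)"
      using Cons.prems assms(1)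
      by (auto simp: index_mult_addrow_mat[OF col_elim_carrier(1)] index_col_elim simp del: index_mult_mat(1))
  qed auto
  also have "col_elim n N A (insert x T) =
      col_elim n N A (set xs \<union> insert x T) * elementary_product n (rev (map (\<lambda>x. (N, x)) xs)) (rev (map (\<lambda>x. A $$ (N, x)) xs))"
    using Cons.prems by (intro Cons.IH) auto
  finally show ?case
    by (simp add: assoc_mult_mat[of _ n n _ n _ n] elementary_product_append insert_commute)
qed

lemma norm_diff_mult_le: "cmod a \<le> K \<Longrightarrow> cmod b \<le> K \<Longrightarrow> cmod c \<le> K \<Longrightarrow> cmod (a - b * c) \<le> K + K * K"
  by (smt (verit) mult_mono norm_ge_zero norm_mult norm_triangle_ineq4)

lemma entries_le_row_elim:
  assumes "entries_le n A K" "N < n"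
  shows "entries_le n (row_elim n N A S) (K + K * K)"
  using assms entries_le_nonneg[OF assms(1)]
  by (auto simp: entries_le_def index_row_elim norm_diff_mult_le intro: add_increasing2)

lemma entries_le_col_elim:
  assumes "entries_le n A K" "N < n"
  shows "entries_le n (col_elim n N A T) (K + K * K)"
  using assms entries_le_nonneg[OF assms(1)]
  by (auto simp: entries_le_def index_col_elim norm_diff_mult_le intro: add_increasing2)

lemma clear_last_row_and_column:
  assumes n: "n = Suc N" and A: "A \<in> carrier_mat n n" "A $$ (N, N) = 1" "entries_le n A C"
  shows "\<exists>E B F. word_factorable n (map (\<lambda>x. (x, N)) [0..<N]) (C + C * C) E \<and>
    word_factorable n (rev (map (\<lambda>x. (N, x)) [0..<N])) (C + C * C) F \<and>
    B \<in> carrier_mat n n \<and> entries_le n B ((C + C * C) + (C + C * C) * (C + C * C)) \<and>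
    (\<forall>j<N. B $$ (N, j) = 0) \<and> (\<forall>i<N. B $$ (i, N) = 0) \<and> B $$ (N, N) = 1 \<and> A = E * (B * F)"
proof -
  have Nn: "N < n" using n by simp
  have C: "0 \<le> C" using entries_le_nonneg[OF A(3)] n by simp
  define R where "R = row_elim n N A {0..<N}"
  define B where "B = col_elim n N R {0..<N}"
  define E where "E = elementary_product n (map (\<lambda>x. (x, N)) [0..<N]) (map (\<lambda>x. A $$ (x, N)) [0..<N])"
  define F where "F = elementary_product n (rev (map (\<lambda>x. (N, x)) [0..<N])) (rev (map (\<lambda>x. R $$ (N, x)) [0..<N]))"
  have R_entries: "entries_le n R (C + C * C)" unfolding R_def by (rule entries_le_row_elim[OF A(3) Nn])
  have "A = E * R"
    using row_elim_factor[of N n "[0..<N]" "{}" A] row_elim_empty[OF A(1)] Nn by (simp add: R_def E_def)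
  moreover have "col_elim n N R {} = col_elim n N R (set [0..<N] \<union> {}) * F"
    unfolding F_def by (rule col_elim_factor) (use Nn in auto)
  then have "R = B * F" by (simp add: B_def R_def col_elim_empty)
  moreover have "word_factorable n (map (\<lambda>x. (x, N)) [0..<N]) (C + C * C) E"
    using A(3) Nn C unfolding word_factorable_def entries_le_def E_def
    by (intro exI[of _ "map (\<lambda>x. A $$ (x, N)) [0..<N]"]) (auto intro: add_increasing2)
  moreover have "word_factorable n (rev (map (\<lambda>x. (N, x)) [0..<N])) (C + C * C) F"
    using R_entries Nn unfolding word_factorable_def entries_le_def F_def
    by (intro exI[of _ "rev (map (\<lambda>x. R $$ (N, x)) [0..<N])"]) auto
  moreover have "entries_le n B ((C + C * C) + (C + C * C) * (C + C * C))"
    unfolding B_def by (rule entries_le_col_elim[OF R_entries Nn])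
  moreover have "(\<forall>j<N. B $$ (N, j) = 0) \<and> (\<forall>i<N. B $$ (i, N) = 0) \<and> B $$ (N, N) = 1"
    using A(2) Nn by (auto simp: B_def R_def index_col_elim index_row_elim)
  moreover have "B \<in> carrier_mat n n" by (simp add: B_def)
  ultimately show ?thesis by (intro exI[of _ E] exI[of _ B] exI[of _ F]) simp
qed

definition embed_mat :: "nat \<Rightarrow> nat \<Rightarrow> complex Matrix.mat \<Rightarrow> complex Matrix.mat" where
  "embed_mat n N X = Matrix.mat n n (\<lambda>(i, j). if i < N \<and> j < N then X $$ (i, j) else if i = j then 1 else 0)"

lemma index_embed_mat:
  "i < n \<Longrightarrow> j < n \<Longrightarrow> embed_mat n N X $$ (i, j) = (if i < N \<and> j < N then X $$ (i, j) else if i = j then 1 else 0)"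
  unfolding embed_mat_def by simp

lemma embed_mat_carrier [simp]:
  "embed_mat n N X \<in> carrier_mat n n" "dim_row (embed_mat n N X) = n" "dim_col (embed_mat n N X) = n"
  unfolding embed_mat_def by simp_all

lemma embed_mat_one: "embed_mat n N (1\<^sub>m N) = 1\<^sub>m n"
  by (rule eq_matI) (auto simp: index_embed_mat)

lemma elementary_product_embed:
  "valid_word N W \<Longrightarrow> N \<le> n \<Longrightarrow> elementary_product n W cs = embed_mat n N (elementary_product N W cs)"
proof (induction N W cs rule: elementary_product.induct)
  case (1 N i j W c cs)
  then have ij: "i < N" "j < N" "valid_word N W" by (auto simp: valid_word_def)
  have "addrow_mat n c i j * embed_mat n N X = embed_mat n N (addrow_mat N c i j * X)"
    if X: "X \<in> carrier_mat N N" for X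
  proof (rule eq_matI)
    fix a b assume "a < dim_row (embed_mat n N (addrow_mat N c i j * X))"
      "b < dim_col (embed_mat n N (addrow_mat N c i j * X))"
    then have ab: "a < n" "b < n" by auto
    show "(addrow_mat n c i j * embed_mat n N X) $$ (a, b) = embed_mat n N (addrow_mat N c i j * X) $$ (a, b)"
    proof (cases "a < N \<and> b < N")
      case True
      then show ?thesis using ij ab \<open>N \<le> n\<close>
        by (simp add: index_addrow_mat_mult[OF embed_mat_carrier(1)] index_addrow_mat_mult[OF X]
            index_embed_mat del: index_mult_mat(1))
    next
      case False
      then show ?thesis using ij ab \<open>N \<le> n\<close>
        by (auto simp: index_addrow_mat_mult[OF embed_mat_carrier(1)] index_embed_mat
            simp del: index_mult_mat(1))
    qed
  qed auto
  with 1 ij show ?case by simp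
qed (simp_all add: embed_mat_one)

lemma word_factorable_embed:
  "valid_word N W \<Longrightarrow> N \<le> n \<Longrightarrow> word_factorable N W D X \<Longrightarrow> word_factorable n W D (embed_mat n N X)"
  unfolding word_factorable_def by (metis elementary_product_embed)

lemma det_last_row_unit:
  assumes A: "A \<in> carrier_mat (Suc N) (Suc N)" and "\<And>j. j < N \<Longrightarrow> A $$ (N, j) = 0" "A $$ (N, N) = 1"
  shows "det A = det (Matrix.mat N N (\<lambda>(i, j). A $$ (i, j)))"
proof -
  have "det A = (\<Sum>j<Suc N. A $$ (N, j) * cofactor A N j)"
    by (rule laplace_expansion_row[OF A]) simp
  also have "\<dots> = cofactor A N N" using assms(2,3) by (simp add: sum.lessThan_Suc)
  also have "\<dots> = det (Matrix.mat N N (\<lambda>(i, j). A $$ (i, j)))"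
  proof -
    have "mat_delete A N N = Matrix.mat N N (\<lambda>(i, j). A $$ (i, j))"
      using A by (intro eq_matI) (auto simp: mat_delete_def)
    then show ?thesis by (simp add: cofactor_def)
  qed
  finally show ?thesis .
qed

lemma det_eq_one_dim_lt_2:
  assumes "n < 2" "A \<in> carrier_mat n n" "det A = 1"
  shows "A = 1\<^sub>m n"
proof (cases "n = 0")
  case False
  with assms have n: "n = 1" by simp
  with assms have "det A = prod_list (diag_mat A)"
    by (intro det_upper_triangular) (auto simp: upper_triangular_def)
  with assms n show ?thesis by (intro eq_matI) (auto simp: diag_mat_def)
qed (use assms in \<open>auto intro: eq_matI\<close>)

lemma word_factorable_last_block:
  assumes n: "n = Suc N" and W: "valid_word N W" "\<forall>B \<in> bounded_SL N C. word_factorable N W D B"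
    and A: "A \<in> carrier_mat n n" "entries_le n A C" "det A = 1"
    and last: "\<forall>j<N. A $$ (N, j) = 0" "\<forall>i<N. A $$ (i, N) = 0" "A $$ (N, N) = 1"
  shows "word_factorable n W D A"
proof -
  define B where "B = Matrix.mat N N (\<lambda>(i, j). A $$ (i, j))"
  have "det B = 1" using det_last_row_unit[of A N] A last n by (simp add: B_def)
  moreover have "entries_le N B C" using A(2) n by (auto simp: entries_le_def B_def)
  ultimately have "word_factorable N W D B" using W(2) by (auto simp: bounded_SL_def B_def)
  moreover have "A = embed_mat n N B"
    using A(1) last n by (intro eq_matI) (auto simp: index_embed_mat B_def less_Suc_eq)
  ultimately show ?thesis using word_factorable_embed[OF W(1)] n by simp
qed

lemma bounded_SL_word_factorization_step:
  assumes n: "n = Suc N" "N = Suc m"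
    and IH: "\<And>C. \<exists>W D. valid_word N W \<and> (\<forall>A \<in> bounded_SL N C. word_factorable N W D A)"
  shows "\<exists>W D. valid_word n W \<and> (\<forall>A \<in> bounded_SL n C. word_factorable n W D A)"
proof -
  define W_corner where "W_corner = map (\<lambda>i. (N, i)) [0..<N] @ [(m, N), (N, m)]"
  define W_col where "W_col = map (\<lambda>x. (x, N)) [0..<N]"
  define W_row where "W_row = rev (map (\<lambda>x. (N, x)) [0..<N])"
  obtain K C' where corner: "\<forall>A \<in> bounded_SL n C. \<exists>E A'. word_factorable n W_corner K E \<and>
      A' \<in> carrier_mat n n \<and> A' $$ (N, N) = 1 \<and> entries_le n A' C' \<and> A = E * A'"
    using corner_normalization[OF n, of C] unfolding W_corner_def by blast
  define C1 where "C1 = C' + C' * C'"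
  obtain W' D' where W': "valid_word N W'" "\<forall>B \<in> bounded_SL N (C1 + C1 * C1). word_factorable N W' D' B"
    using IH by blast
  define D where "D = max K (max C1 D')"
  have valid: "valid_word n W_corner" "valid_word n W_col" "valid_word n W_row" "valid_word n W'"
    using W'(1) n by (auto simp: valid_word_def W_corner_def W_col_def W_row_def)
  have "word_factorable n (W_corner @ W_col @ W' @ W_row) D A" if A: "A \<in> bounded_SL n C" for A
  proof -
    obtain E A' where E: "word_factorable n W_corner K E" and A': "A' \<in> carrier_mat n n" "A' $$ (N, N) = 1"
      "entries_le n A' C'" and A_eq: "A = E * A'"
      using corner A by blast
    obtain E' B F where E': "word_factorable n W_col C1 E'" and F: "word_factorable n W_row C1 F"
      and B: "B \<in> carrier_mat n n" "entries_le n B (C1 + C1 * C1)"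
        "\<forall>j<N. B $$ (N, j) = 0" "\<forall>i<N. B $$ (i, N) = 0" "B $$ (N, N) = 1"
      and A'_eq: "A' = E' * (B * F)"
      using clear_last_row_and_column[OF n(1) A'] unfolding C1_def W_col_def W_row_def by blast
    have carrier: "E \<in> carrier_mat n n" "E' \<in> carrier_mat n n" "F \<in> carrier_mat n n"
      using E E' F by (auto intro: word_factorable_carrier)
    have "det A = det E * (det E' * (det B * det F))"
      unfolding A_eq A'_eq using carrier B(1) by (simp add: det_mult[of _ n] mult_carrier_mat)
    then have "det B = 1"
      using A det_word_factorable[OF valid(1) E] det_word_factorable[OF valid(2) E']
        det_word_factorable[OF valid(3) F] by (simp add: bounded_SL_def)
    with B have "word_factorable n W' D' B"
      by (intro word_factorable_last_block[OF n(1) W']) auto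
    then have "word_factorable n W' D B" by (rule word_factorable_mono) (simp add: D_def)
    moreover have "word_factorable n W_corner D E" using E by (rule word_factorable_mono) (simp add: D_def)
    moreover have "word_factorable n W_col D E'" using E' by (rule word_factorable_mono) (simp add: D_def)
    moreover have "word_factorable n W_row D F" using F by (rule word_factorable_mono) (simp add: D_def)
    ultimately show ?thesis unfolding A_eq A'_eq by (metis word_factorable_mult)
  qed
  with valid show ?thesis by (intro exI[of _ "W_corner @ W_col @ W' @ W_row"] exI[of _ D]) (auto simp: valid_word_def)
qed

text \<open>The word \<open>W\<close> and the bound \<open>D\<close> do not depend on \<open>A\<close>: this uniformity is what lets
  the factorizations of the coordinate matrices be assembled into one over \<open>A(p)\<close>.\<close>

theorem bounded_SL_word_factorization:
  "\<exists>W D. valid_word n W \<and> (\<forall>A \<in> bounded_SL n C. word_factorable n W D A)"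
proof (induction n arbitrary: C rule: less_induct)
  case (less n)
  show ?case
  proof (cases "n < 2")
    case True
    then have "\<forall>A \<in> bounded_SL n C. word_factorable n [] 0 A"
      using det_eq_one_dim_lt_2 by (auto simp: bounded_SL_def word_factorable_def)
    then show ?thesis by (intro exI[of _ "[]"] exI[of _ 0]) (simp add: valid_word_def)
  next
    case False
    then obtain m where n: "n = Suc (Suc m)" by (metis less_2_cases_iff not0_implies_Suc not_less_zero)
    have "\<exists>W D. valid_word (Suc m) W \<and> (\<forall>A \<in> bounded_SL (Suc m) C'. word_factorable (Suc m) W D A)" for C'
      using less.IH[of "Suc m" C'] n by blast
    then show ?thesis by (rule bounded_SL_word_factorization_step[OF n refl])
  qed
qed

section \<open>Transfer to \<open>A(p)\<close>\<close>

definition bounded_mat_seq :: "nat \<Rightarrow> (nat \<Rightarrow> complex Matrix.mat) \<Rightarrow> bool" where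
  "bounded_mat_seq k Y \<longleftrightarrow> (\<forall>m. Y m \<in> carrier_mat k k) \<and> (\<forall>a<k. \<forall>b<k. Bseq (\<lambda>m. Y m $$ (a, b)))"

definition coef_mat :: "(nat \<Rightarrow> real) \<Rightarrow> nat \<Rightarrow> mat \<Rightarrow> nat \<Rightarrow> complex Matrix.mat" where
  "coef_mat p k M m = Matrix.mat k k (\<lambda>(a, b). weighted_coef p (M a b) m)"

definition lift_mat :: "(nat \<Rightarrow> real) \<Rightarrow> (nat \<Rightarrow> complex Matrix.mat) \<Rightarrow> mat" where
  "lift_mat p Y = (\<lambda>a b. weighted_series p (\<lambda>m. Y m $$ (a, b)))"

definition eq_upto :: "nat \<Rightarrow> mat \<Rightarrow> mat \<Rightarrow> bool" where
  "eq_upto k X Y \<longleftrightarrow> (\<forall>a<k. \<forall>b<k. X a b = Y a b)"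

definition elementary_mat :: "(nat \<Rightarrow> real) \<Rightarrow> nat \<Rightarrow> nat \<Rightarrow> (complex \<Rightarrow> complex) \<Rightarrow> mat" where
  "elementary_mat p i j \<alpha> = (\<lambda>a b. if a = b then eps p else if a = i \<and> b = j then \<alpha> else (\<lambda>_. 0))"

lemma elementary_elementary_mat:
  "i < k \<Longrightarrow> j < k \<Longrightarrow> i \<noteq> j \<Longrightarrow> \<alpha> \<in> Ap p \<Longrightarrow> elementary p k (elementary_mat p i j \<alpha>)"
  unfolding elementary_def elementary_mat_def by blast

lemma coef_mat_carrier: "coef_mat p k M m \<in> carrier_mat k k"
  by (simp add: coef_mat_def)

lemma index_mult_mat_sum:
  fixes X Y :: "complex Matrix.mat"
  assumes "X \<in> carrier_mat k k" "Y \<in> carrier_mat k k" "a < k" "b < k"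
  shows "(X * Y) $$ (a, b) = (\<Sum>l<k. X $$ (a, l) * Y $$ (l, b))"
  using assms by (simp add: scalar_prod_def atLeast0LessThan)

lemma bounded_mat_seq_mult:
  assumes Y: "bounded_mat_seq k Y" and Z: "bounded_mat_seq k Z"
  shows "bounded_mat_seq k (\<lambda>m. Y m * Z m)"
  unfolding bounded_mat_seq_def
proof (intro conjI allI impI)
  show "Y m * Z m \<in> carrier_mat k k" for m
    using Y Z unfolding bounded_mat_seq_def by (blast intro: mult_carrier_mat)
  fix a b assume ab: "a < k" "b < k"
  with Y Z have "Bseq (\<lambda>m. \<Sum>l<k. Y m $$ (a, l) * Z m $$ (l, b))"
    unfolding bounded_mat_seq_def by (auto intro!: Bseq_sum Bseq_mult)
  moreover have "(Y m * Z m) $$ (a, b) = (\<Sum>l<k. Y m $$ (a, l) * Z m $$ (l, b))" for m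
    using Y Z ab unfolding bounded_mat_seq_def by (intro index_mult_mat_sum) auto
  ultimately show "Bseq (\<lambda>m. (Y m * Z m) $$ (a, b))" by simp
qed

lemma bounded_mat_seq_addrow_mat:
  assumes "Bseq \<alpha>"
  shows "bounded_mat_seq k (\<lambda>m. addrow_mat k (\<alpha> m) i j)"
  unfolding bounded_mat_seq_def
proof (intro conjI allI impI)
  fix a b assume "a < k" "b < k"
  then show "Bseq (\<lambda>m. addrow_mat k (\<alpha> m) i j $$ (a, b))"
    using Bseq_add[OF assms] by (cases "i = a \<and> j = b") auto
qed simp

lemma bounded_mat_seq_elementary_product:
  "length \<alpha>s = length W \<Longrightarrow> (\<And>\<alpha>. \<alpha> \<in> set \<alpha>s \<Longrightarrow> Bseq \<alpha>) \<Longrightarrow>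
    bounded_mat_seq k (\<lambda>m. elementary_product k W (map (\<lambda>\<alpha>. \<alpha> m) \<alpha>s))"
proof (induction W arbitrary: \<alpha>s)
  case Nil then show ?case by (simp add: bounded_mat_seq_def)
next
  case (Cons w W)
  then obtain \<alpha> \<alpha>s' where "\<alpha>s = \<alpha> # \<alpha>s'" by (cases \<alpha>s) auto
  with Cons show ?case
    by (cases w) (auto intro!: bounded_mat_seq_mult bounded_mat_seq_addrow_mat)
qed

lemma Bseq_det:
  assumes "bounded_mat_seq k Y"
  shows "Bseq (\<lambda>m. det (Y m))"
proof -
  have "Bseq (\<lambda>m. \<Sum>\<sigma> | \<sigma> permutes {0..<k}. signof \<sigma> * (\<Prod>i = 0..<k. Y m $$ (i, \<sigma> i)))"
    using assms permutes_in_image unfolding bounded_mat_seq_def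
    by (intro Bseq_sum Bseq_mult Bseq_prod) fastforce+
  moreover have "det (Y m) = (\<Sum>\<sigma> | \<sigma> permutes {0..<k}. signof \<sigma> * (\<Prod>i = 0..<k. Y m $$ (i, \<sigma> i)))" for m
    using assms unfolding bounded_mat_seq_def by (blast intro: det_def')
  ultimately show ?thesis by simp
qed

context rapid_weight
begin

lemma bounded_mat_seq_coef_mat:
  "(\<And>a b. a < k \<Longrightarrow> b < k \<Longrightarrow> M a b \<in> Ap p) \<Longrightarrow> bounded_mat_seq k (coef_mat p k M)"
  by (simp add: bounded_mat_seq_def coef_mat_def Bseq_weighted_coef)

lemma lift_coef_mat:
  "(\<And>a b. a < k \<Longrightarrow> b < k \<Longrightarrow> M a b \<in> Ap p) \<Longrightarrow> eq_upto k (lift_mat p (coef_mat p k M)) M"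
  by (simp add: eq_upto_def lift_mat_def coef_mat_def weighted_series_coef)

lemma matmul_lift:
  assumes Y: "bounded_mat_seq k Y" and Z: "bounded_mat_seq k Z"
    and X1: "eq_upto k X1 (lift_mat p Y)" and X2: "eq_upto k X2 (lift_mat p Z)"
  shows "eq_upto k (matmul p k X1 X2) (lift_mat p (\<lambda>m. Y m * Z m))"
  unfolding eq_upto_def
proof (intro allI impI ext)
  fix a b z assume ab: "a < k" "b < k"
  have bounded: "Bseq (\<lambda>m. Y m $$ (a, l))" "Bseq (\<lambda>m. Z m $$ (l, b))" if "l < k" for l
    using Y Z ab that unfolding bounded_mat_seq_def by auto
  have "matmul p k X1 X2 a b z = (\<Sum>l<k. weighted_series p (\<lambda>m. Y m $$ (a, l) * Z m $$ (l, b)) z)"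
    using X1 X2 ab bounded
    by (auto simp: matmul_def eq_upto_def lift_mat_def hmult_weighted_series intro!: sum.cong)
  also have "\<dots> = weighted_series p (\<lambda>m. \<Sum>l<k. Y m $$ (a, l) * Z m $$ (l, b)) z"
    using bounded by (intro weighted_series_sum[symmetric]) (auto intro: Bseq_mult)
  also have "(\<lambda>m. \<Sum>l<k. Y m $$ (a, l) * Z m $$ (l, b)) = (\<lambda>m. (Y m * Z m) $$ (a, b))"
    using Y Z ab unfolding bounded_mat_seq_def by (intro ext index_mult_mat_sum[symmetric]) auto
  also have "weighted_series p \<dots> z = lift_mat p (\<lambda>m. Y m * Z m) a b z"
    by (simp add: lift_mat_def)
  finally show "matmul p k X1 X2 a b z = lift_mat p (\<lambda>m. Y m * Z m) a b z" .
qed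

lemma idmat_lift: "eq_upto k (idmat p) (lift_mat p (\<lambda>m. 1\<^sub>m k))"
  by (auto simp: eq_upto_def lift_mat_def idmat_def eps_eq_weighted_series weighted_series_zero)

lemma elementary_mat_lift:
  "i < k \<Longrightarrow> j < k \<Longrightarrow> i \<noteq> j \<Longrightarrow>
    eq_upto k (elementary_mat p i j (weighted_series p \<alpha>)) (lift_mat p (\<lambda>m. addrow_mat k (\<alpha> m) i j))"
  by (auto simp: eq_upto_def lift_mat_def elementary_mat_def eps_eq_weighted_series weighted_series_zero)

lemma foldr_matmul_elementary_lift:
  assumes "valid_word k W" "length \<alpha>s = length W" "\<And>\<alpha>. \<alpha> \<in> set \<alpha>s \<Longrightarrow> Bseq \<alpha>"
  shows "eq_upto k
    (foldr (matmul p k) (map2 (\<lambda>(i, j) \<alpha>. elementary_mat p i j (weighted_series p \<alpha>)) W \<alpha>s) (idmat p))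
    (lift_mat p (\<lambda>m. elementary_product k W (map (\<lambda>\<alpha>. \<alpha> m) \<alpha>s)))"
  using assms
proof (induction W arbitrary: \<alpha>s)
  case Nil then show ?case using idmat_lift by simp
next
  case (Cons w W)
  obtain i j where w: "w = (i, j)" by (cases w)
  obtain \<alpha> \<alpha>s' where \<alpha>s: "\<alpha>s = \<alpha> # \<alpha>s'" using Cons.prems(2) by (cases \<alpha>s) auto
  have ij: "i < k" "j < k" "i \<noteq> j" "valid_word k W" using Cons.prems(1) w by (auto simp: valid_word_def)
  show ?case unfolding w \<alpha>s
    using Cons.prems \<alpha>s ij
    by (auto intro!: matmul_lift bounded_mat_seq_addrow_mat bounded_mat_seq_elementary_product
        elementary_mat_lift Cons.IH)
qed

lemma hprod_list_weighted_series:
  "(\<And>x. x \<in> set xs \<Longrightarrow> x \<in> Ap p) \<Longrightarrow>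
    hprod_list p xs = weighted_series p (\<lambda>m. \<Prod>x\<leftarrow>xs. weighted_coef p x m)"
proof (induction xs)
  case Nil then show ?case by (simp add: hprod_list_def eps_eq_weighted_series)
next
  case (Cons x xs)
  have "Bseq (\<lambda>m. \<Prod>x\<leftarrow>xs. weighted_coef p x m)"
    using Cons.prems by (intro Bseq_prod_list Bseq_weighted_coef) auto
  with Cons show ?case
    by (simp add: hprod_list_def hmult_eq_weighted_series weighted_coef_series)
qed

lemma hdet_eq_weighted_series:
  assumes M: "\<And>a b. a < k \<Longrightarrow> b < k \<Longrightarrow> M a b \<in> Ap p"
  shows "hdet p k M = weighted_series p (\<lambda>m. det (coef_mat p k M m))"
proof (rule ext)
  fix z
  define P where "P = {\<sigma>. \<sigma> permutes {0..<k}}"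
  define t where "t = (\<lambda>\<sigma> m. (\<Prod>i = 0..<k. coef_mat p k M m $$ (i, \<sigma> i)))"
  have \<sigma>k: "\<sigma> i < k" if "\<sigma> \<in> P" "i < k" for \<sigma> i
    using that permutes_in_image unfolding P_def by fastforce
  have hprod: "hprod_list p (map (\<lambda>i. M i (\<sigma> i)) [0..<k]) = weighted_series p (t \<sigma>)" if "\<sigma> \<in> P" for \<sigma>
  proof -
    have "hprod_list p (map (\<lambda>i. M i (\<sigma> i)) [0..<k]) =
        weighted_series p (\<lambda>m. \<Prod>x\<leftarrow>map (\<lambda>i. M i (\<sigma> i)) [0..<k]. weighted_coef p x m)"
      using that M \<sigma>k by (intro hprod_list_weighted_series) auto
    also have "(\<lambda>m. \<Prod>x\<leftarrow>map (\<lambda>i. M i (\<sigma> i)) [0..<k]. weighted_coef p x m) = t \<sigma>"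
      using \<sigma>k[OF that]
      by (auto simp: t_def coef_mat_def prod.distinct_set_conv_list[symmetric] o_def intro!: prod.cong)
    finally show ?thesis .
  qed
  have t: "Bseq (t \<sigma>)" if "\<sigma> \<in> P" for \<sigma>
    using that \<sigma>k M unfolding t_def by (intro Bseq_prod) (auto simp: coef_mat_def Bseq_weighted_coef)
  have "hdet p k M z = (\<Sum>\<sigma>\<in>P. weighted_series p (\<lambda>m. of_int (sign \<sigma>) * t \<sigma> m) z)"
    using t hprod by (simp add: hdet_def P_def lessThan_atLeast0 weighted_series_cmult)
  also have "\<dots> = weighted_series p (\<lambda>m. \<Sum>\<sigma>\<in>P. of_int (sign \<sigma>) * t \<sigma> m) z"
    using t by (intro weighted_series_sum[symmetric]) (auto simp: P_def finite_permutations intro: Bseq_mult)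
  also have "(\<lambda>m. \<Sum>\<sigma>\<in>P. of_int (sign \<sigma>) * t \<sigma> m) = (\<lambda>m. det (coef_mat p k M m))"
    by (simp add: det_def'[OF coef_mat_carrier] P_def t_def)
  finally show "hdet p k M z = weighted_series p (\<lambda>m. det (coef_mat p k M m)) z" .
qed

lemma det_coef_mat_SL:
  assumes "M \<in> SL p k"
  shows "det (coef_mat p k M m) = 1"
proof -
  have M: "\<And>a b. a < k \<Longrightarrow> b < k \<Longrightarrow> M a b \<in> Ap p" and "hdet p k M = eps p"
    using assms by (auto simp: SL_def)
  then have "weighted_series p (\<lambda>m. det (coef_mat p k M m)) = weighted_series p (\<lambda>_. 1)"
    by (simp add: hdet_eq_weighted_series eps_eq_weighted_series)
  then have "(\<lambda>m. det (coef_mat p k M m)) = (\<lambda>_. 1)"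
    using weighted_series_inj[of "\<lambda>m. det (coef_mat p k M m)" "\<lambda>_. 1"]
      Bseq_det[OF bounded_mat_seq_coef_mat[OF M]] by simp
  from fun_cong[OF this, of m] show ?thesis by simp
qed

lemma in_E_if_coef_mat_factorable:
  assumes M: "\<And>a b. a < k \<Longrightarrow> b < k \<Longrightarrow> M a b \<in> Ap p" and W: "valid_word k W"
    and factorable: "\<And>m. word_factorable k W D (coef_mat p k M m)"
  shows "in_E p k M"
proof -
  obtain cs where cs: "\<And>m. length (cs m) = length W" "\<And>m. \<forall>c\<in>set (cs m). cmod c \<le> D"
    "\<And>m. coef_mat p k M m = elementary_product k W (cs m)"
    using factorable unfolding word_factorable_def by metis
  define \<alpha>s where "\<alpha>s = map (\<lambda>t m. cs m ! t) [0..<length W]"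
  have Bseq_\<alpha>s: "Bseq \<alpha>" if \<alpha>: "\<alpha> \<in> set \<alpha>s" for \<alpha>
  proof -
    obtain t where t: "t < length W" "\<alpha> = (\<lambda>m. cs m ! t)" using \<alpha> by (auto simp: \<alpha>s_def)
    have "cmod (cs m ! t) \<le> D" for m using nth_mem[of t "cs m"] cs(1,2)[of m] t(1) by auto
    then show ?thesis unfolding t(2) by (rule BseqI')
  qed
  have \<alpha>s: "length \<alpha>s = length W" "\<And>m. map (\<lambda>\<alpha>. \<alpha> m) \<alpha>s = cs m"
    using cs(1) by (auto simp: \<alpha>s_def intro!: nth_equalityI)
  define Gs where "Gs = map2 (\<lambda>(i, j) \<alpha>. elementary_mat p i j (weighted_series p \<alpha>)) W \<alpha>s"
  have "elementary p k G" if G_in: "G \<in> set Gs" for G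
  proof -
    obtain i j \<alpha> where i_j_\<alpha>: "((i, j), \<alpha>) \<in> set (zip W \<alpha>s)"
      and G: "G = elementary_mat p i j (weighted_series p \<alpha>)"
      using G_in unfolding Gs_def by auto
    from set_zip_leftD[OF i_j_\<alpha>] set_zip_rightD[OF i_j_\<alpha>] W
    have "i < k" "j < k" "i \<noteq> j" "\<alpha> \<in> set \<alpha>s" by (auto simp: valid_word_def)
    then show ?thesis
      unfolding G by (intro elementary_elementary_mat weighted_series_in_Ap Bseq_\<alpha>s)
  qed
  moreover have "eq_upto k (foldr (matmul p k) Gs (idmat p)) M"
    using foldr_matmul_elementary_lift[OF W \<alpha>s(1) Bseq_\<alpha>s] lift_coef_mat[OF M]
    unfolding Gs_def \<alpha>s(2) cs(3)[symmetric] by (simp add: eq_upto_def)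
  ultimately show ?thesis unfolding in_E_def eq_upto_def by blast
qed

end

theorem mainTheorem19:
  fixes p :: "nat \<Rightarrow> real" and k :: nat and M :: mat
  assumes "\<And>n. p n > 0"
    and "filterlim (\<lambda>n. root n (p n)) at_top sequentially"
    and "M \<in> SL p k"
  shows "in_E p k M"
proof -
  interpret rapid_weight p using assms(1,2) by unfold_locales
  have M: "\<And>a b. a < k \<Longrightarrow> b < k \<Longrightarrow> M a b \<in> Ap p" using assms(3) by (simp add: SL_def)
  obtain C where C: "\<forall>(a, b) \<in> {..<k} \<times> {..<k}. \<forall>m. cmod (weighted_coef p (M a b) m) \<le> C"
    using Bseq_finite_family[of "{..<k} \<times> {..<k}" "\<lambda>(a, b). weighted_coef p (M a b)"] M Bseq_weighted_coef
    by fastforce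
  have bounded: "coef_mat p k M m \<in> bounded_SL k C" for m
    using C det_coef_mat_SL[OF assms(3)] by (auto simp: bounded_SL_def entries_le_def coef_mat_def)
  obtain W D where W: "valid_word k W" "\<forall>A \<in> bounded_SL k C. word_factorable k W D A"
    using bounded_SL_word_factorization by blast
  have "word_factorable k W D (coef_mat p k M m)" for m
    using W(2) bounded[of m] by (rule bspec)
  with M W(1) show ?thesis by (rule in_E_if_coef_mat_factorable)
qed

end
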